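(* For every modal proposition $A$: (1) if $A\in\mathsf{NOI}$ then $\mathsf{iK4}+\mathsf{CP}_a\vdash A\to\Box A$; (2) $\mathsf{iK4}\vdash A^l\to A$; (3) if $A\in\mathsf{NOI}$ then $\mathsf{iK4}+\mathsf{CP}_a\vdash A^l\leftrightarrow A$; (4) $\mathsf{LLe}^+\vdash\Box A^l\leftrightarrow\Box A$.
   Context: Modal language: propositional variables, $\bot$, $\wedge,\vee,\to$, $\Box$; atomic = variables and $\bot$; $\boxdot A:=A\wedge\Box A$. $\mathsf{iK4}$: intuitionistic propositional logic in the modal language plus $\Box(A\to B)\to(\Box A\to\Box B)$ and $\Box A\to\Box\Box A$, closed under modus ponens and necessitation; $\mathsf{iGL}$: $\mathsf{iK4}$ plus $\Box(\Box A\to A)\to\Box A$. $\mathsf{CP}_a$: $p\to\Box p$ for atomic $p$. $\mathsf{NOI}$: propositions in which every $\to$ lies in the scope of a $\Box$. Leivant's translation: $A^l=A$ for atomic/boxed $A$; $(A\wedge B)^l=A^l\wedge B^l$; $(A\vee B)^l=\boxdot A^l\vee\boxdot B^l$; $(A\to B)^l=A\to B^l$ if $A\in\mathsf{NOI}$, else $A\to B$. $\mathsf{LLe}^+:=\mathsf{iGL}+\{\Box A\to\Box A^l\}+\mathsf{CP}_a$. *)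

theory Defs
  imports Main
begin

datatype fm = Var nat | Bot | And fm fm | Or fm fm | Imp fm fm | Box fm

fun atomic :: "fm \<Rightarrow> bool" where
  "atomic (Var p) = True"
| "atomic Bot = True"
| "atomic _ = False"

definition boxdot :: "fm \<Rightarrow> fm" where
  "boxdot A = And A (Box A)"

definition Iff :: "fm \<Rightarrow> fm \<Rightarrow> fm" where
  "Iff A B = And (Imp A B) (Imp B A)"

fun noi :: "fm \<Rightarrow> bool" where
  "noi (Var p) = True"
| "noi Bot = True"
| "noi (And A B) = (noi A \<and> noi B)"
| "noi (Or A B) = (noi A \<and> noi B)"
| "noi (Imp A B) = False"
| "noi (Box A) = True"

fun lv :: "fm \<Rightarrow> fm" where
  "lv (Var p) = Var p"
| "lv Bot = Bot"
| "lv (Box A) = Box A"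
| "lv (And A B) = And (lv A) (lv B)"
| "lv (Or A B) = Or (boxdot (lv A)) (boxdot (lv B))"
| "lv (Imp A B) = (if noi A then Imp A (lv B) else Imp A B)"

inductive prv :: "(fm \<Rightarrow> bool) \<Rightarrow> fm \<Rightarrow> bool" for Ax where
  ax: "Ax A \<Longrightarrow> prv Ax A"
| k1: "prv Ax (Imp A (Imp B A))"
| k2: "prv Ax (Imp (Imp A (Imp B C)) (Imp (Imp A B) (Imp A C)))"
| c1: "prv Ax (Imp (And A B) A)"
| c2: "prv Ax (Imp (And A B) B)"
| c3: "prv Ax (Imp A (Imp B (And A B)))"
| d1: "prv Ax (Imp A (Or A B))"
| d2: "prv Ax (Imp B (Or A B))"
| d3: "prv Ax (Imp (Imp A C) (Imp (Imp B C) (Imp (Or A B) C)))"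
| efq: "prv Ax (Imp Bot A)"
| K: "prv Ax (Imp (Box (Imp A B)) (Imp (Box A) (Box B)))"
| four: "prv Ax (Imp (Box A) (Box (Box A)))"
| mp: "prv Ax (Imp A B) \<Longrightarrow> prv Ax A \<Longrightarrow> prv Ax B"
| nec: "prv Ax A \<Longrightarrow> prv Ax (Box A)"

definition CPa :: "fm \<Rightarrow> bool" where
  "CPa F \<longleftrightarrow> (\<exists>p. atomic p \<and> F = Imp p (Box p))"

definition Lob :: "fm \<Rightarrow> bool" where
  "Lob F \<longleftrightarrow> (\<exists>A. F = Imp (Box (Imp (Box A) A)) (Box A))"

definition LeAx :: "fm \<Rightarrow> bool" where
  "LeAx F \<longleftrightarrow> (\<exists>A. F = Imp (Box A) (Box (lv A)))"

abbreviation iK4 :: "fm \<Rightarrow> bool" where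
  "iK4 \<equiv> prv (\<lambda>_. False)"

abbreviation iK4CPa :: "fm \<Rightarrow> bool" where
  "iK4CPa \<equiv> prv CPa"

abbreviation LLe_plus :: "fm \<Rightarrow> bool" where
  "LLe_plus \<equiv> prv (\<lambda>F. Lob F \<or> LeAx F \<or> CPa F)"

end

theory Submission
  imports Defs
begin

text \<open>For NOI formulas the axioms
  p -> Box p at the atoms, propagated through conjunction, disjunction and (by axiom 4)
  Box, give A -> Box A and hence A -> boxdot A; this is exactly what the boxdots that
  Leivant's translation inserts at disjunctions require, so A -> A^l. The converse
  A^l -> A holds outright, since boxdot B -> B and implication is monotone in its
  consequent. Part (4) boxes A^l -> A and takes the other direction from the Leivant
  axiom.\<close>

lemma prv_imp_trans: "prv Ax (Imp A B) \<Longrightarrow> prv Ax (Imp B C) \<Longrightarrow> prv Ax (Imp A C)"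
proof -
  assume ab: "prv Ax (Imp A B)" and bc: "prv Ax (Imp B C)"
  have "prv Ax (Imp A (Imp B C))" using prv.mp[OF prv.k1 bc] .
  then have "prv Ax (Imp (Imp A B) (Imp A C))" using prv.mp[OF prv.k2] by blast
  then show ?thesis using ab prv.mp by blast
qed

lemma prv_imp_refl: "prv Ax (Imp A A)"
proof -
  have "prv Ax (Imp (Imp A (Imp (Imp A A) A)) (Imp (Imp A (Imp A A)) (Imp A A)))"
    by (rule prv.k2)
  then have "prv Ax (Imp (Imp A (Imp A A)) (Imp A A))" using prv.k1 prv.mp by blast
  then show ?thesis using prv.k1 prv.mp by blast
qed

lemma prv_imp_conjI: "prv Ax (Imp A B) \<Longrightarrow> prv Ax (Imp A C) \<Longrightarrow> prv Ax (Imp A (And B C))"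
proof -
  assume ab: "prv Ax (Imp A B)" and ac: "prv Ax (Imp A C)"
  have "prv Ax (Imp A (Imp C (And B C)))" using prv_imp_trans[OF ab prv.c3] .
  then have "prv Ax (Imp (Imp A C) (Imp A (And B C)))" using prv.mp[OF prv.k2] by blast
  then show ?thesis using ac prv.mp by blast
qed

lemma prv_imp_disjE: "prv Ax (Imp A C) \<Longrightarrow> prv Ax (Imp B C) \<Longrightarrow> prv Ax (Imp (Or A B) C)"
  using prv.mp[OF prv.mp[OF prv.d3]] by blast

lemma prv_IffI: "prv Ax (Imp A B) \<Longrightarrow> prv Ax (Imp B A) \<Longrightarrow> prv Ax (Iff A B)"
  unfolding Iff_def using prv.mp[OF prv.mp[OF prv.c3]] by blast

lemma prv_and_mono:
  "prv Ax (Imp A A') \<Longrightarrow> prv Ax (Imp B B') \<Longrightarrow> prv Ax (Imp (And A B) (And A' B'))"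
  by (rule prv_imp_conjI) (auto intro: prv_imp_trans[OF prv.c1] prv_imp_trans[OF prv.c2])

lemma prv_imp_mono: "prv Ax (Imp B B') \<Longrightarrow> prv Ax (Imp (Imp A B) (Imp A B'))"
proof -
  assume "prv Ax (Imp B B')"
  then have "prv Ax (Imp A (Imp B B'))" using prv.mp[OF prv.k1] by blast
  then show ?thesis using prv.mp[OF prv.k2] by blast
qed

lemma prv_box_mono: "prv Ax (Imp A B) \<Longrightarrow> prv Ax (Imp (Box A) (Box B))"
  using prv.mp[OF prv.K prv.nec] by blast

lemma prv_uncurry: "prv Ax (Imp A (Imp B C)) \<Longrightarrow> prv Ax (Imp (And A B) C)"
proof -
  assume "prv Ax (Imp A (Imp B C))"
  then have "prv Ax (Imp (And A B) (Imp B C))" using prv_imp_trans[OF prv.c1] by blast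
  then have "prv Ax (Imp (Imp (And A B) B) (Imp (And A B) C))" using prv.mp[OF prv.k2] by blast
  then show ?thesis using prv.c2 prv.mp by blast
qed

lemma prv_box_and: "prv Ax (Imp (And (Box A) (Box B)) (Box (And A B)))"
proof -
  have "prv Ax (Imp (Box A) (Box (Imp B (And A B))))" by (rule prv_box_mono[OF prv.c3])
  then have "prv Ax (Imp (Box A) (Imp (Box B) (Box (And A B))))"
    using prv_imp_trans prv.K by blast
  then show ?thesis by (rule prv_uncurry)
qed

lemma noi_imp_box:
  assumes CPa_Ax: "\<And>F. CPa F \<Longrightarrow> Ax F" and "noi A"
  shows "prv Ax (Imp A (Box A))"
  using \<open>noi A\<close>
proof (induction A)
  case (Var p)
  show ?case by (auto intro!: prv.ax CPa_Ax simp: CPa_def)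
next
  case Bot
  show ?case by (auto intro!: prv.ax CPa_Ax simp: CPa_def)
next
  case (And A B)
  then show ?case using prv_imp_trans[OF prv_and_mono prv_box_and] by auto
next
  case (Or A B)
  then have "prv Ax (Imp A (Box (Or A B)))" and "prv Ax (Imp B (Box (Or A B)))"
    using prv_imp_trans[OF _ prv_box_mono[OF prv.d1]] prv_imp_trans[OF _ prv_box_mono[OF prv.d2]]
    by auto
  then show ?case by (rule prv_imp_disjE)
next
  case (Imp A B)
  then show ?case by simp
next
  case (Box A)
  show ?case by (rule prv.four)
qed

lemma lv_imp: "prv Ax (Imp (lv A) A)"
proof (induction A)
  case (And A B)
  then show ?case by (simp add: prv_and_mono)
next
  case (Or A B)
  have "prv Ax (Imp (boxdot (lv A)) (Or A B))"
    unfolding boxdot_def using prv_imp_trans[OF prv.c1 prv_imp_trans[OF Or.IH(1) prv.d1]] .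
  moreover have "prv Ax (Imp (boxdot (lv B)) (Or A B))"
    unfolding boxdot_def using prv_imp_trans[OF prv.c1 prv_imp_trans[OF Or.IH(2) prv.d2]] .
  ultimately show ?case by (simp add: prv_imp_disjE)
next
  case (Imp A B)
  then show ?case by (simp add: prv_imp_mono prv_imp_refl)
qed (auto simp: prv_imp_refl)

lemma noi_imp_lv:
  assumes CPa_Ax: "\<And>F. CPa F \<Longrightarrow> Ax F" and "noi A"
  shows "prv Ax (Imp A (lv A))"
  using \<open>noi A\<close>
proof (induction A)
  case (And A B)
  then show ?case by (simp add: prv_and_mono)
next
  case (Or A B)
  have to_boxdot: "prv Ax (Imp C (boxdot (lv C)))" if "noi C" and "prv Ax (Imp C (lv C))" for C
    unfolding boxdot_def using that
    by (intro prv_imp_conjI) (auto intro: prv_imp_trans[OF noi_imp_box[OF CPa_Ax] prv_box_mono])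
  have "prv Ax (Imp A (Or (boxdot (lv A)) (boxdot (lv B))))"
    using Or to_boxdot prv_imp_trans[OF _ prv.d1] by auto
  moreover have "prv Ax (Imp B (Or (boxdot (lv A)) (boxdot (lv B))))"
    using Or to_boxdot prv_imp_trans[OF _ prv.d2] by auto
  ultimately show ?case by (simp add: prv_imp_disjE)
qed (auto simp: prv_imp_refl)

lemma box_lv_iff:
  assumes "\<And>F. LeAx F \<Longrightarrow> Ax F"
  shows "prv Ax (Iff (Box (lv A)) (Box A))"
  using assms by (intro prv_IffI prv_box_mono lv_imp prv.ax) (auto simp: LeAx_def)

theorem lemma4p20:
  fixes A :: fm
  shows "(noi A \<longrightarrow> iK4CPa (Imp A (Box A)))
       \<and> iK4 (Imp (lv A) A)
       \<and> (noi A \<longrightarrow> iK4CPa (Iff (lv A) A))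
       \<and> LLe_plus (Iff (Box (lv A)) (Box A))"
proof (intro conjI impI)
  show "noi A \<Longrightarrow> iK4CPa (Imp A (Box A))" by (rule noi_imp_box)
  show "iK4 (Imp (lv A) A)" by (rule lv_imp)
  show "noi A \<Longrightarrow> iK4CPa (Iff (lv A) A)" by (intro prv_IffI lv_imp noi_imp_lv)
  show "LLe_plus (Iff (Box (lv A)) (Box A))" by (rule box_lv_iff) simp
qed

end
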